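(* Let $X$ be the compact symplectic toric manifold determined by a moment polytope $P=\bigcap_{j=1}^m\{\mathbf{u}\in\mathbb{R}^n : \ell_j(\mathbf{u})\ge 0\}\subset\mathbb{R}^n$, where $\ell_j(\mathbf{u})=\langle \mathbf{u},\mathbf{v}_j\rangle-\lambda_j$. For a point $\mathbf{u}$ in the interior of $P$, the following are equivalent: (1) The toric fiber $L(\mathbf{u})$ is strongly bulk-balanced. (2) $\mathbf{u}\in\mathrm{Trop}(P,\mathbf{m})$ for every lattice point $\mathbf{m}\in\mathbb{Z}^n$. (3) $\mathbf{u}\in\mathrm{Trop}(P,\mathbf{m})$ for every primitive lattice point $\mathbf{m}\in\mathbb{Z}^n$ that is orthogonal to some $(n-1)$-dimensional subspace of $\mathbb{R}^n$ spanned by facet normal vectors $\mathbf{v}_j$ of $P$.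
   Context: The moment polytope is written uniquely as $P=\bigcap_{j=1}^m\{\mathbf{u}: \langle\mathbf{u},\mathbf{v}_j\rangle\ge\lambda_j\}$ with $\mathbf{v}_j\in\mathbb{Z}^n$ primitive inward normals and the intersection non-redundant (each half-space bounds a distinct facet); $\ell_j(\mathbf{u}):=\langle\mathbf{u},\mathbf{v}_j\rangle-\lambda_j$. $L(\mathbf{u})$ denotes the Lagrangian torus fiber of the moment map over $\mathbf{u}$. Tropicalization relative to $\mathbf{m}\in\mathbb{Z}^n$: $\mathrm{Trop}(P,\mathbf{m})$ is the non-differentiable locus of the piecewise-linear function $\mathbf{u}\mapsto\min\{\ell_j(\mathbf{u}) : \langle\mathbf{m},\mathbf{v}_j\rangle\neq0\}$; equivalently the set of $\mathbf{u}$ at which this minimum is attained by at least two distinct indices $j_1\ne j_2$ with $\langle \mathbf{m},\mathbf{v}_{j_1}\rangle\neq 0\neq\langle \mathbf{m},\mathbf{v}_{j_2}\rangle$. By convention $\mathrm{Trop}(P,\mathbf{0})=\mathbb{R}^n$. Strongly bulk-balanced: for $\mathbf{u}\in\mathrm{Int}(P)$ let $S_1<S_2<\cdots$ be the distinct values among $\ell_1(\mathbf{u}),\dots,\ell_m(\mathbf{u})$ and $I_l=\{j:\ell_j(\mathbf{u})=S_l\}$. Let $A_l^\perp=\mathrm{span}_\mathbb{R}\{\mathbf{v}_j : j\in I_1\cup\dots\cup I_l\}$ ($A_0^\perp=0$), $d_l=\dim A_l^\perp-\dim A_{l-1}^\perp$, and $\kappa$ the smallest $l$ with $A_l^\perp=\mathbb{R}^n$.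 Choose vectors $e^*_{r,s}\in\mathbb{Q}^n$ ($1\le r\le\kappa$, $1\le s\le d_r$) such that for each $l$, $\{e^*_{r,s}: r\le l\}$ is a $\mathbb{Q}$-basis of $A_l^\perp\cap\mathbb{Q}^n$, and every $\mathbf{v}_j$ lies in $\bigoplus_{r,s}\mathbb{Z}e^*_{r,s}$. Write $\mathbf{v}_j=\sum_{r,s}v_j^{r,s}e^*_{r,s}$ and $\mathbf{y}^{\mathbf{v}_j}=\prod_{r,s}y_{r,s}^{v_j^{r,s}}$ in variables $y_{r,s}$. For $c=(c_1,\dots,c_m)\in(\mathbb{C}^* )^m$ and $1\le l\le\kappa$ put $F^c_l(\mathbf{y})=\sum_{j\in I_l}c_j\,\mathbf{y}^{\mathbf{v}_j}$. The generalized leading term equation (for $c$) is the system $y_{l,s}\,\partial F^c_l/\partial y_{l,s}=0$ for all $1\le l\le\kappa$, $1\le s\le d_l$. The fiber $L(\mathbf{u})$ is strongly bulk-balanced if for some $c\in(\mathbb{C}^* )^m$ this system has a solution $(y_{r,s})\in(\mathbb{C}^* )^n$ (whether such a solution exists does not depend on the choice of the vectors $e^*_{r,s}$). *)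

theory Defs
  imports "HOL-Analysis.Analysis"
begin

text \<open>Vectors of R^n are modelled as real^'n with a finite index type 'n (n = CARD('n)).
  The polytope has m facets indexed by 0..m-1; v j are the inward normals, lam j the constants.\<close>

definition lattice_pt :: "real^'n \<Rightarrow> bool" where
  "lattice_pt x \<longleftrightarrow> (\<forall>i. x $ i \<in> \<int>)"

definition rational_pt :: "real^'n \<Rightarrow> bool" where
  "rational_pt x \<longleftrightarrow> (\<forall>i. x $ i \<in> \<rat>)"

definition primitive_pt :: "real^'n \<Rightarrow> bool" where
  "primitive_pt x \<longleftrightarrow> lattice_pt x \<and> x \<noteq> 0 \<and>
     (\<forall>d::int. d \<ge> 1 \<and> lattice_pt ((1 / of_int d) *\<^sub>R x) \<longrightarrow> d = 1)"

definition ell :: "(nat \<Rightarrow> real^'n) \<Rightarrow> (nat \<Rightarrow> real) \<Rightarrow> nat \<Rightarrow> real^'n \<Rightarrow> real" where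
  "ell v lam j u = u \<bullet> v j - lam j"

definition polytope :: "(nat \<Rightarrow> real^'n) \<Rightarrow> (nat \<Rightarrow> real) \<Rightarrow> nat \<Rightarrow> (real^'n) set" where
  "polytope v lam m = {u. \<forall>j<m. ell v lam j u \<ge> 0}"

text \<open>Standing assumptions: P is the moment polytope of a compact symplectic toric manifold
  (a Delzant polytope) written with primitive integral inward normals and non-redundantly,
  each half-space bounding a distinct facet.\<close>

definition delzant_presentation :: "(nat \<Rightarrow> real^'n) \<Rightarrow> (nat \<Rightarrow> real) \<Rightarrow> nat \<Rightarrow> bool" where
  "delzant_presentation v lam m \<longleftrightarrow>
     bounded (polytope v lam m) \<and> interior (polytope v lam m) \<noteq> {} \<and>
     (\<forall>j<m. primitive_pt (v j)) \<and>
     (\<forall>j<m. \<exists>u\<in>polytope v lam m. ell v lam j u = 0 \<and>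
              (\<forall>i<m. i \<noteq> j \<longrightarrow> ell v lam i u > 0)) \<and>
     (\<forall>w\<in>polytope v lam m.
        let J = {j. j < m \<and> ell v lam j w = 0} in
        span (v ` J) = UNIV \<longrightarrow>
          card J = CARD('n) \<and>
          (\<forall>z. lattice_pt z \<longrightarrow> (\<exists>c::nat \<Rightarrow> int. z = (\<Sum>j\<in>J. of_int (c j) *\<^sub>R v j))))"

definition trop :: "(nat \<Rightarrow> real^'n) \<Rightarrow> (nat \<Rightarrow> real) \<Rightarrow> nat \<Rightarrow> real^'n \<Rightarrow> (real^'n) set" where
  "trop v lam m mm =
     (if mm = 0 then UNIV
      else {u. \<exists>j1 j2. j1 < m \<and> j2 < m \<and> j1 \<noteq> j2 \<and>
                 mm \<bullet> v j1 \<noteq> 0 \<and> mm \<bullet> v j2 \<noteq> 0 \<and>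
                 ell v lam j1 u = ell v lam j2 u \<and>
                 (\<forall>j<m. mm \<bullet> v j \<noteq> 0 \<longrightarrow> ell v lam j1 u \<le> ell v lam j u)})"

text \<open>Level data at a point u: S l is the l-th smallest value (l \<ge> 1) among the ell j u,
  I l the indices attaining it, Aperp l the span of the normals in levels 1..l, kappa the first
  level where Aperp is everything.\<close>

definition lev_vals :: "(nat \<Rightarrow> real^'n) \<Rightarrow> (nat \<Rightarrow> real) \<Rightarrow> nat \<Rightarrow> real^'n \<Rightarrow> real list" where
  "lev_vals v lam m u = sorted_list_of_set ((\<lambda>j. ell v lam j u) ` {..<m})"

definition lev_I :: "(nat \<Rightarrow> real^'n) \<Rightarrow> (nat \<Rightarrow> real) \<Rightarrow> nat \<Rightarrow> real^'n \<Rightarrow> nat \<Rightarrow> nat set" where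
  "lev_I v lam m u l = {j. j < m \<and> ell v lam j u = lev_vals v lam m u ! (l - 1)}"

definition Aperp :: "(nat \<Rightarrow> real^'n) \<Rightarrow> (nat \<Rightarrow> real) \<Rightarrow> nat \<Rightarrow> real^'n \<Rightarrow> nat \<Rightarrow> (real^'n) set" where
  "Aperp v lam m u l = span (v ` (\<Union>l'\<in>{1..l}. lev_I v lam m u l'))"

definition kappa :: "(nat \<Rightarrow> real^'n) \<Rightarrow> (nat \<Rightarrow> real) \<Rightarrow> nat \<Rightarrow> real^'n \<Rightarrow> nat" where
  "kappa v lam m u = (LEAST l. Aperp v lam m u l = UNIV)"

text \<open>Admissible basis: the family e*_{r,s} is indexed by k < n, with lev k = r recording the
  level r of e k.\<close>

definition admissible_basis ::
  "(nat \<Rightarrow> real^'n) \<Rightarrow> (nat \<Rightarrow> real) \<Rightarrow> nat \<Rightarrow> real^'n \<Rightarrow>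
   (nat \<Rightarrow> real^'n) \<Rightarrow> (nat \<Rightarrow> nat) \<Rightarrow> (nat \<Rightarrow> nat \<Rightarrow> int) \<Rightarrow> bool" where
  "admissible_basis v lam m u e lev a \<longleftrightarrow>
     (let n = CARD('n); \<kappa> = kappa v lam m u in
      (\<forall>k<n. rational_pt (e k) \<and> 1 \<le> lev k \<and> lev k \<le> \<kappa>) \<and>
      (\<forall>l\<in>{1..\<kappa>}.
         let K = {k. k < n \<and> lev k \<le> l} in
         (\<forall>k\<in>K. e k \<in> Aperp v lam m u l) \<and>
         (\<forall>q. (\<forall>k\<in>K. q k \<in> \<rat>) \<and> (\<Sum>k\<in>K. q k *\<^sub>R e k) = 0 \<longrightarrow> (\<forall>k\<in>K. q k = 0)) \<and>
         (\<forall>w\<in>Aperp v lam m u l. rational_pt w \<longrightarrow>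
             (\<exists>q. (\<forall>k\<in>K. q k \<in> \<rat>) \<and> w = (\<Sum>k\<in>K. q k *\<^sub>R e k)))) \<and>
      (\<forall>j<m. v j = (\<Sum>k<n. of_int (a j k) *\<^sub>R e k)))"

definition ymono :: "(nat \<Rightarrow> nat \<Rightarrow> int) \<Rightarrow> nat \<Rightarrow> nat \<Rightarrow> (nat \<Rightarrow> complex) \<Rightarrow> complex" where
  "ymono a n j y = (\<Prod>k<n. y k powi a j k)"

definition Fc ::
  "(nat \<Rightarrow> real^'n) \<Rightarrow> (nat \<Rightarrow> real) \<Rightarrow> nat \<Rightarrow> real^'n \<Rightarrow> (nat \<Rightarrow> nat \<Rightarrow> int) \<Rightarrow>
   (nat \<Rightarrow> complex) \<Rightarrow> nat \<Rightarrow> (nat \<Rightarrow> complex) \<Rightarrow> complex" where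
  "Fc v lam m u a c l y = (\<Sum>j\<in>lev_I v lam m u l. c j * ymono a CARD('n) j y)"

definition strongly_bulk_balanced :: "(nat \<Rightarrow> real^'n) \<Rightarrow> (nat \<Rightarrow> real) \<Rightarrow> nat \<Rightarrow> real^'n \<Rightarrow> bool" where
  "strongly_bulk_balanced v lam m u \<longleftrightarrow>
     (\<exists>e lev a c y.
        admissible_basis v lam m u e lev a \<and>
        (\<forall>j<m. c j \<noteq> 0) \<and> (\<forall>k<CARD('n). y k \<noteq> 0) \<and>
        (\<forall>l\<in>{1..kappa v lam m u}. \<forall>k<CARD('n). lev k = l \<longrightarrow>
            y k * deriv (\<lambda>t. Fc v lam m u a c l (y(k := t))) (y k) = 0))"

end

theory Submission
  imports Defs
begin

text \<open>All three conditions are equivalent to a condition on the facet normals at u: every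
  normal v_j lies in the span of the normals v_i, i \<noteq> j, with \<ell>_i(u) \<le> \<ell>_j(u).

  If this fails for some j, a vector orthogonal to those normals but not to v_j can be
  chosen primitive and orthogonal to a hyperplane spanned by normals; for this m the minimum
  defining Trop(P,m) is attained at j alone. If it holds, then for any m \<noteq> 0 the minimum is
  attained at some j, and since m does not vanish on the span of the lower and tied normals,
  it is attained at a second index as well.

  At y = (1, ..., 1) the generalized leading term equations become the linear system
  \<Sum>_{j \<in> I_l} c_j a_jk = 0 (k of level l) in the coefficients a_jk of v_j in the basis.
  The condition provides, for each j, a real solution with c_j \<noteq> 0, and a generic linear
  combination of these has no zero entry. Conversely, pairing the equations of the level of
  v_j with a linear form that kills the lower and tied normals but not v_j leaves only the
  term c_j y^{v_j} \<langle>x, v_j\<rangle>, which cannot vanish.\<close>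

section \<open>Lattice coordinates\<close>

lemma det_in_Ints:
  fixes A :: "real^'n^'n"
  assumes "\<And>i j. A $ i $ j \<in> \<int>"
  shows "det A \<in> \<int>"
  unfolding det_def by (intro Ints_sum Ints_mult Ints_prod Ints_of_int) (auto simp: assms)

lemma det_in_Rats:
  fixes A :: "real^'n^'n"
  assumes "\<And>i j. A $ i $ j \<in> \<rat>"
  shows "det A \<in> \<rat>"
  unfolding det_def by (intro Rats_sum Rats_mult Rats_prod Rats_of_int) (auto simp: assms)

lemma lattice_pt_imp_rational_pt: "lattice_pt x \<Longrightarrow> rational_pt x"
  by (auto simp: lattice_pt_def rational_pt_def Ints_subset_Rats[THEN subsetD])

definition replace_row :: "real^'n^'n \<Rightarrow> 'n \<Rightarrow> real^'n \<Rightarrow> real^'n^'n" where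
  "replace_row A i w = (\<chi> i'. if i' = i then w else A $ i')"

lemma linear_det_replace_row:
  fixes A :: "real^'n^'n"
  shows "linear (\<lambda>w. det (replace_row A i w))"
proof (rule linearI)
  fix x y :: "real^'n"
  show "det (replace_row A i (x + y)) = det (replace_row A i x) + det (replace_row A i y)"
    unfolding replace_row_def using det_row_add[of i "\<lambda>_. x" "\<lambda>_. y" "\<lambda>i'. A $ i'"] by simp
next
  fix c :: real and x :: "real^'n"
  have "c *\<^sub>R x = c *s x" by (simp add: vec_eq_iff)
  then have "det (replace_row A i (c *\<^sub>R x)) = det (\<chi> i'. if i' = i then c *s x else A $ i')"
    by (simp add: replace_row_def)
  also have "\<dots> = c * det (replace_row A i x)"
    unfolding replace_row_def by (rule det_row_mul)
  finally show "det (replace_row A i (c *\<^sub>R x)) = c *\<^sub>R det (replace_row A i x)"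
    by (simp only: real_scaleR_def)
qed

lemma det_replace_row_by_row:
  "det (replace_row A i (A $ j)) = (if i = j then det A else 0)"
proof (cases "i = j")
  case True
  then have "replace_row A i (A $ j) = A" by (simp add: replace_row_def vec_eq_iff)
  then show ?thesis using True by simp
next
  case False
  have "row i (replace_row A i (A $ j)) = row j (replace_row A i (A $ j))"
    using False by (simp add: replace_row_def row_def)
  with False show ?thesis using det_identical_rows[OF False] by simp
qed

lemma row_expansion_Cramer:
  fixes A :: "real^'n^'n"
  assumes "det A \<noteq> 0"
  shows "w = (\<Sum>i\<in>UNIV. (det (replace_row A i w) / det A) *\<^sub>R A $ i)"
proof -
  have row: "row i A = A $ i" for i by (simp add: row_def)
  obtain A' :: "real^'n^'n" where inv: "A' ** A = mat 1"
    using assms invertible_det_nz invertible_def by blast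
  define x where "x = w v* A'"
  have w: "w = (\<Sum>i\<in>UNIV. x $ i *s A $ i)"
  proof -
    have "w = x v* A" using inv by (simp add: x_def vector_matrix_mul_assoc)
    then show ?thesis by (simp add: vec_eq_iff vector_matrix_mult_def mult.commute)
  qed
  have "det (replace_row A i w) = x $ i * det A" for i
    using cramer_lemma_transpose[of i x A, unfolded row] w by (simp add: replace_row_def)
  then show ?thesis
    using assms by (subst (1) w) (simp add: scalar_mult_eq_scaleR)
qed

lemma det_nonzero_if_rows_span:
  fixes A :: "real^'n^'n"
  assumes "span (range (($) A)) = UNIV"
  shows "det A \<noteq> 0"
proof -
  have "rows A = range (($) A)" by (auto simp: rows_def row_def)
  then have "\<exists>A'. A' ** A = mat 1" using assms matrix_left_invertible_span_rows[of A] by simp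
  then show ?thesis using invertible_left_inverse invertible_det_nz by blast
qed

lemma basis_card_eq_CARD:
  fixes B :: "(real^'n) set"
  assumes "independent B" "span B = UNIV"
  shows "finite B \<and> card B = CARD('n)"
  using assms by (metis basis_card_eq_dim dim_UNIV independent_bound DIM_cart DIM_real
      mult.right_neutral subset_UNIV)

lemma lattice_basis_coordinates:
  fixes B :: "(real^'n) set"
  assumes indep: "independent B" and sp: "span B = UNIV" and lat: "\<forall>b\<in>B. lattice_pt b"
  obtains G D coord where
    "bij_betw G {..<CARD('n)} B"
    "D \<noteq> 0" "D \<in> \<int>"
    "\<And>k. linear (coord k)"
    "\<And>k w. lattice_pt w \<Longrightarrow> coord k w \<in> \<int>"
    "\<And>k w. rational_pt w \<Longrightarrow> coord k w \<in> \<rat>"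
    "\<And>k k'. k < CARD('n) \<Longrightarrow> k' < CARD('n) \<Longrightarrow> coord k (G k') = (if k = k' then D else 0)"
    "\<And>w. w = (\<Sum>k<CARD('n). (coord k w / D) *\<^sub>R G k)"
proof -
  let ?n = "CARD('n)"
  obtain G where G: "bij_betw G {..<?n} B"
    using ex_bij_betw_nat_finite[of B] basis_card_eq_CARD[OF indep sp] by (auto simp: atLeast0LessThan)
  obtain g :: "nat \<Rightarrow> 'n" where g: "bij_betw g {..<?n} UNIV"
    using ex_bij_betw_nat_finite[of "UNIV :: 'n set"] by (auto simp: atLeast0LessThan)
  define A :: "real^'n^'n" where "A = (\<chi> i. G (inv_into {..<?n} g i))"
  have Ag: "A $ g k = G k" if "k < ?n" for k
    using g that by (simp add: A_def bij_betw_inv_into_left)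
  have rows: "range (($) A) = B"
  proof -
    have "range (($) A) = (\<lambda>k. A $ g k) ` {..<?n}" using g by (metis bij_betw_def image_image)
    also have "\<dots> = G ` {..<?n}" using Ag by (intro image_cong) auto
    also have "\<dots> = B" using G by (simp add: bij_betw_def)
    finally show ?thesis .
  qed
  have latA: "A $ i $ j \<in> \<int>" for i j
    using lat rows by (auto simp: lattice_pt_def)
  have D: "det A \<noteq> 0" using rows sp by (simp add: det_nonzero_if_rows_span)
  define coord where "coord k w = det (replace_row A (g k) w)" for k w
  show ?thesis
  proof
    show "bij_betw G {..<?n} B" "det A \<noteq> 0" by fact+
    show "det A \<in> \<int>" using latA by (rule det_in_Ints)
    show "linear (coord k)" for k unfolding coord_def[abs_def] by (rule linear_det_replace_row)
    show "coord k w \<in> \<int>" if "lattice_pt w" for k w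
      unfolding coord_def using that latA
      by (intro det_in_Ints) (auto simp: replace_row_def lattice_pt_def)
    show "coord k w \<in> \<rat>" if "rational_pt w" for k w
      unfolding coord_def using that latA
      by (intro det_in_Rats) (auto simp: replace_row_def rational_pt_def Ints_subset_Rats[THEN subsetD])
    show "coord k (G k') = (if k = k' then det A else 0)" if "k < ?n" "k' < ?n" for k k'
      using that g det_replace_row_by_row[of A "g k" "g k'"]
      by (auto simp: coord_def Ag bij_betw_def inj_on_eq_iff)
    show "w = (\<Sum>k<?n. (coord k w / det A) *\<^sub>R G k)" for w
      using row_expansion_Cramer[OF D, of w] sum.reindex_bij_betw[OF g, of "\<lambda>i. (det (replace_row A i w) / det A) *\<^sub>R A $ i"]
      by (simp add: coord_def Ag)
  qed
qed

lemma linear_eq_inner_vec: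
  fixes f :: "real^'n \<Rightarrow> real"
  assumes "linear f"
  shows "f w = (\<chi> t. f (axis t 1)) \<bullet> w"
proof -
  have "f w = f (\<Sum>t\<in>UNIV. w $ t *\<^sub>R axis t 1)"
    using basis_expansion[of w] by (simp add: scalar_mult_eq_scaleR)
  also have "\<dots> = (\<Sum>t\<in>UNIV. w $ t * f (axis t 1))"
    by (simp add: linear_sum[OF assms] linear_scale[OF assms])
  finally show ?thesis by (simp add: inner_vec_def mult.commute)
qed

lemma exists_primitive_divisor:
  fixes x :: "real^'n"
  assumes lat: "lattice_pt x" and nz: "x \<noteq> 0"
  obtains d :: int where "d \<ge> 1" "primitive_pt ((1 / of_int d) *\<^sub>R x)"
proof -
  obtain i where xi: "x $ i \<noteq> 0" using nz by (metis vec_eq_iff zero_index)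
  define S where "S = {d::int. d \<ge> 1 \<and> lattice_pt ((1 / of_int d) *\<^sub>R x)}"
  have bnd: "d \<le> \<lfloor>\<bar>x $ i\<bar>\<rfloor>" if "d \<in> S" for d
  proof -
    have d1: "d \<ge> 1" and "(1 / of_int d) * x $ i \<in> \<int>" using that
      by (auto simp: S_def lattice_pt_def)
    then obtain z where z: "(1 / of_int d) * x $ i = of_int z" by (auto elim: Ints_cases)
    have "z \<noteq> 0" using z xi d1 by auto
    then have "\<bar>of_int z\<bar> \<ge> (1::real)" by linarith
    then have "\<bar>x $ i\<bar> \<ge> of_int d" using z d1 by (auto simp: abs_mult field_simps)
    then show ?thesis by linarith
  qed
  have finS: "finite S" using bnd by (intro finite_subset[of S "{1..\<lfloor>\<bar>x $ i\<bar>\<rfloor>}"]) (auto simp: S_def)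
  have "1 \<in> S" using lat by (simp add: S_def)
  then have dS: "Max S \<in> S" using finS by (intro Max_in) auto
  have dmax: "d' \<le> Max S" if "d' \<in> S" for d' using finS that by simp
  have d1: "Max S \<ge> 1" using dS by (simp add: S_def)
  have "primitive_pt ((1 / of_int (Max S)) *\<^sub>R x)"
    unfolding primitive_pt_def
  proof (intro conjI allI impI)
    show "lattice_pt ((1 / of_int (Max S)) *\<^sub>R x)" using dS by (simp add: S_def)
    show "(1 / of_int (Max S)) *\<^sub>R x \<noteq> 0" using nz d1 by simp
    fix d' :: int assume d': "d' \<ge> 1 \<and> lattice_pt ((1 / of_int d') *\<^sub>R (1 / of_int (Max S)) *\<^sub>R x)"
    have "1 * 1 \<le> Max S * d'" using d' d1 by (intro mult_mono) auto
    then have "Max S * d' \<in> S" using d' by (auto simp: S_def mult.commute)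
    then have "Max S * d' \<le> Max S" by (rule dmax)
    then show "d' = 1" using d' d1 by (simp add: mult_le_cancel_left1)
  qed
  with d1 show ?thesis by (rule that)
qed

lemma orthogonal_to_span_detecting:
  fixes a :: "'a::euclidean_space"
  assumes "a \<notin> span S"
  obtains x where "\<And>w. w \<in> span S \<Longrightarrow> x \<bullet> w = 0" "x \<bullet> a \<noteq> 0"
proof -
  obtain y z where y: "y \<in> span S" and z: "\<And>w. w \<in> span S \<Longrightarrow> orthogonal z w" and a: "a = y + z"
    using orthogonal_subspace_decomp_exists by blast
  have "z \<noteq> 0" using assms y a by auto
  then have "z \<bullet> a \<noteq> 0" using z[OF y] a by (simp add: orthogonal_def inner_add_right)
  with z show ?thesis by (intro that) (auto simp: orthogonal_def)
qed

lemma in_span_image_imp_sum: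
  fixes f :: "'a \<Rightarrow> 'b::real_vector"
  assumes "finite A" "x \<in> span (f ` A)"
  obtains r where "x = (\<Sum>a\<in>A. r a *\<^sub>R f a)"
  using assms
proof (induction A arbitrary: x thesis rule: finite_induct)
  case empty
  then show ?case by simp
next
  case (insert a A)
  from insert.prems obtain k where "x - k *\<^sub>R f a \<in> span (f ` A)" by (auto simp: span_insert)
  then obtain r where r: "x - k *\<^sub>R f a = (\<Sum>b\<in>A. r b *\<^sub>R f b)" using insert.IH by blast
  have "(\<Sum>b\<in>insert a A. (r(a := k)) b *\<^sub>R f b) = k *\<^sub>R f a + (\<Sum>b\<in>A. r b *\<^sub>R f b)"
    using insert.hyps by (auto intro: sum.cong)
  then show ?case using r insert.prems(1) by (metis add.commute diff_add_cancel)
qed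

lemma exists_adapted_basis:
  fixes V :: "nat \<Rightarrow> 'a::euclidean_space set"
  assumes mono: "\<And>l. V l \<subseteq> V (Suc l)"
  obtains B where "B \<subseteq> V K" "independent B" "\<And>l. l \<le> K \<Longrightarrow> V l \<subseteq> span (B \<inter> V l)"
proof -
  have "\<exists>B. B \<subseteq> V K \<and> independent B \<and> (\<forall>l\<le>K. V l \<subseteq> span (B \<inter> V l))"
  proof (induction K)
    case 0
    obtain B where "B \<subseteq> V 0" "independent B" "V 0 \<subseteq> span B" using maximal_independent_subset by blast
    then show ?case by (intro exI[of _ B]) (auto simp: Int_absorb2)
  next
    case (Suc K)
    then obtain B where B: "B \<subseteq> V K" "independent B" "\<forall>l\<le>K. V l \<subseteq> span (B \<inter> V l)" by blast
    have "B \<subseteq> V (Suc K)" using B(1) mono by blast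
    then obtain B' where B': "B \<subseteq> B'" "B' \<subseteq> V (Suc K)" "independent B'" "V (Suc K) \<subseteq> span B'"
      using maximal_independent_subset_extend[OF _ B(2)] by blast
    have "V l \<subseteq> span (B' \<inter> V l)" if "l \<le> Suc K" for l
    proof (cases "l = Suc K")
      case True
      then show ?thesis using B' by (simp add: Int_absorb2)
    next
      case False
      then have "V l \<subseteq> span (B \<inter> V l)" using B(3) that by simp
      also have "\<dots> \<subseteq> span (B' \<inter> V l)" using B'(1) by (intro span_mono) blast
      finally show ?thesis .
    qed
    then show ?case using B' by blast
  qed
  then show ?thesis using that by blast
qed

lemma exists_graded_lattice_basis:
  fixes V :: "nat \<Rightarrow> (real^'n) set"
  assumes mono: "\<And>l. V l \<subseteq> V (Suc l)" and V0: "V 0 = {}" and sp: "span (V K) = UNIV"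
    and lat: "\<forall>b\<in>V K. lattice_pt b"
  obtains G D coord lev where
    "\<And>k. k < CARD('n) \<Longrightarrow> lattice_pt (G k)"
    "D \<noteq> 0" "D \<in> \<int>"
    "\<And>k. linear (coord k)"
    "\<And>k w. lattice_pt w \<Longrightarrow> coord k w \<in> \<int>"
    "\<And>k w. rational_pt w \<Longrightarrow> coord k w \<in> \<rat>"
    "\<And>k k'. k < CARD('n) \<Longrightarrow> k' < CARD('n) \<Longrightarrow> coord k (G k') = (if k = k' then D else 0)"
    "\<And>w. w = (\<Sum>k<CARD('n). (coord k w / D) *\<^sub>R G k)"
    "\<And>k. k < CARD('n) \<Longrightarrow> 1 \<le> lev k \<and> lev k \<le> K"
    "\<And>k l. k < CARD('n) \<Longrightarrow> lev k \<le> l \<longleftrightarrow> G k \<in> V l"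
    "\<And>l w k. l \<le> K \<Longrightarrow> w \<in> span (V l) \<Longrightarrow> k < CARD('n) \<Longrightarrow> l < lev k \<Longrightarrow> coord k w = 0"
proof -
  let ?n = "CARD('n)"
  have Vmono: "V a \<subseteq> V b" if "a \<le> b" for a b
    using that mono by (induction b rule: dec_induct) auto
  obtain B where B: "B \<subseteq> V K" "independent B" "\<And>l. l \<le> K \<Longrightarrow> V l \<subseteq> span (B \<inter> V l)"
    using exists_adapted_basis[of V K] mono by blast
  have spanV: "span (V l) \<subseteq> span (B \<inter> V l)" if "l \<le> K" for l
    using B(3)[OF that] by (metis span_mono span_span)
  have spB: "span B = UNIV"
    using spanV[of K] sp span_mono[of "B \<inter> V K" B] by auto
  have latB: "\<forall>b\<in>B. lattice_pt b" using B(1) lat by blast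
  obtain G and D :: real and coord where G: "bij_betw G {..<?n} B" and D: "D \<noteq> 0" "D \<in> \<int>"
    and lc: "\<And>k. linear (coord k)"
    and ci: "\<And>k w. lattice_pt w \<Longrightarrow> coord k w \<in> \<int>"
    and cq: "\<And>k w. rational_pt w \<Longrightarrow> coord k w \<in> \<rat>"
    and cG: "\<And>k k'. k < ?n \<Longrightarrow> k' < ?n \<Longrightarrow> coord k (G k') = (if k = k' then D else 0)"
    and rep: "\<And>w. w = (\<Sum>k<?n. (coord k w / D) *\<^sub>R G k)"
    using lattice_basis_coordinates[OF B(2) spB latB] by blast
  have GB: "G k \<in> B" if "k < ?n" for k using G that by (auto simp: bij_betw_def)
  define lev where "lev k = (LEAST l. G k \<in> V l)" for k
  have LV: "lev k \<le> l \<longleftrightarrow> G k \<in> V l" if k: "k < ?n" for k l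
  proof
    have "G k \<in> V (lev k)" unfolding lev_def by (rule LeastI[of _ K]) (use GB[OF k] B(1) in blast)
    then show "lev k \<le> l \<Longrightarrow> G k \<in> V l" using Vmono by blast
    show "G k \<in> V l \<Longrightarrow> lev k \<le> l" unfolding lev_def by (rule Least_le)
  qed
  have "coord k w = 0" if l: "l \<le> K" and w: "w \<in> span (V l)" and k: "k < ?n" "l < lev k" for l w k
  proof -
    have "coord k x = 0" if "x \<in> B \<inter> V l" for x
    proof -
      obtain k' where k': "k' < ?n" "x = G k'" using G \<open>x \<in> B \<inter> V l\<close> by (auto simp: bij_betw_def)
      then have "lev k' \<le> l" using LV[OF k'(1)] \<open>x \<in> B \<inter> V l\<close> by simp
      then have "k' \<noteq> k" using k by auto
      then show ?thesis using cG[OF k(1) k'(1)] k' by simp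
    qed
    then show ?thesis using linear_eq_0_on_span[OF lc] spanV[OF l] w by blast
  qed
  moreover have "1 \<le> lev k \<and> lev k \<le> K" if "k < ?n" for k
    using LV[OF that, of 0] LV[OF that, of K] V0 GB[OF that] B(1) by auto
  ultimately show ?thesis
    using that[of G D coord lev] latB GB D lc ci cq cG rep LV by blast
qed

lemma exists_nowhere_zero_member:
  fixes R :: "('a \<Rightarrow> 'b::field_char_0) set"
  assumes zero: "(\<lambda>_. 0) \<in> R" and add: "\<And>c d. c \<in> R \<Longrightarrow> d \<in> R \<Longrightarrow> (\<lambda>i. c i + d i) \<in> R"
    and scale: "\<And>c s. c \<in> R \<Longrightarrow> (\<lambda>i. s * c i) \<in> R"
    and fin: "finite J" and ex: "\<And>j. j \<in> J \<Longrightarrow> \<exists>c\<in>R. c j \<noteq> 0"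
  shows "\<exists>c\<in>R. \<forall>j\<in>J. c j \<noteq> 0"
  using fin ex
proof (induction J rule: finite_induct)
  case empty
  then show ?case using zero by auto
next
  case (insert j J)
  have "\<exists>c\<in>R. \<forall>i\<in>J. c i \<noteq> 0" by (rule insert.IH) (simp add: insert.prems)
  then obtain c where c: "c \<in> R" "\<forall>i\<in>J. c i \<noteq> 0" by blast
  obtain r where r: "r \<in> R" "r j \<noteq> 0" using insert.prems[of j] by blast
  \<comment> \<open>only finitely many values of s make some coordinate of c + s r vanish\<close>
  have "finite ((\<lambda>i. - c i / r i) ` insert j J)" using insert.hyps by simp
  then obtain s where s: "s \<notin> (\<lambda>i. - c i / r i) ` insert j J"
    using ex_new_if_finite[OF infinite_UNIV_char_0] by blast
  have "\<forall>i\<in>insert j J. c i + s * r i \<noteq> 0"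
  proof
    fix i assume i: "i \<in> insert j J"
    show "c i + s * r i \<noteq> 0"
    proof (cases "r i = 0")
      case True
      then have "i \<in> J" using r(2) i by auto
      then show ?thesis using c(2) True by simp
    next
      case False
      show ?thesis
      proof
        assume "c i + s * r i = 0"
        then have "s * r i = - c i" by (simp only: add_eq_0_iff)
        then have "s = - c i / r i" using False by (metis nonzero_mult_div_cancel_right)
        then show False using s i by auto
      qed
    qed
  qed
  moreover have "(\<lambda>i. c i + s * r i) \<in> R" using add[OF c(1) scale[OF r(1)]] .
  ultimately show ?case by (rule rev_bexI[rotated])
qed

section \<open>Facet normals and the tropical locus\<close>

lemma normals_span_UNIV:
  assumes bd: "bounded (polytope v lam m)" and ne: "p \<in> polytope v lam m"
  shows "span (v ` {..<m}) = UNIV"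
proof (rule ccontr)
  assume "span (v ` {..<m}) \<noteq> UNIV"
  then obtain x where x: "x \<noteq> 0" "\<forall>y\<in>span (v ` {..<m}). x \<bullet> y = 0"
    using span_not_UNIV_orthogonal by blast
  have "p + t *\<^sub>R x \<in> polytope v lam m" for t
  proof -
    have "(p + t *\<^sub>R x) \<bullet> v j = p \<bullet> v j" if "j < m" for j
      using x(2) that by (simp add: inner_add_left span_base)
    then show ?thesis using ne by (simp add: polytope_def ell_def)
  qed
  then have "bounded (range (\<lambda>t. p + t *\<^sub>R x))" using bd by (auto intro: bounded_subset)
  from bounded_translation[OF this, of "- p"] have "bounded (range (\<lambda>t::real. t *\<^sub>R x))"
    by (simp add: image_image)
  then obtain M where M: "\<And>t::real. norm (t *\<^sub>R x) \<le> M" by (auto simp: bounded_iff)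
  have "norm (((\<bar>M\<bar> + 1) / norm x) *\<^sub>R x) = \<bar>M\<bar> + 1" using x(1) by simp
  with M show False by (metis abs_ge_self add_le_same_cancel1 not_one_le_zero order_trans)
qed

lemma hyperplane_of_normals:
  fixes v :: "nat \<Rightarrow> real^'n"
  assumes sp: "span (v ` {..<m}) = UNIV" and j0: "j0 < m" and S: "S \<subseteq> {..<m}"
    and nin: "v j0 \<notin> span (v ` S)"
  obtains J where "J \<subseteq> {..<m}" "v ` S \<subseteq> span (v ` J)" "v j0 \<notin> v ` J"
    "independent (insert (v j0) (v ` J))" "span (insert (v j0) (v ` J)) = UNIV"
proof -
  obtain T where T: "T \<subseteq> v ` S" "independent T" "v ` S \<subseteq> span T"
    using maximal_independent_subset[of "v ` S"] by blast
  have "v j0 \<notin> span T" using nin T(1) span_mono by blast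
  then have "independent (insert (v j0) T)" using T(2) by (simp add: independent_insertI)
  moreover have "insert (v j0) T \<subseteq> v ` {..<m}" using T(1) S j0 by auto
  ultimately obtain B where B: "insert (v j0) T \<subseteq> B" "B \<subseteq> v ` {..<m}" "independent B"
      "v ` {..<m} \<subseteq> span B"
    using maximal_independent_subset_extend by metis
  define J where "J = {j. j < m \<and> v j \<in> B - {v j0}}"
  have vJ: "v ` J = B - {v j0}" using B(2) by (auto simp: J_def)
  have BJ: "B = insert (v j0) (v ` J)" using B(1) vJ by auto
  have "T \<subseteq> v ` J" using B(1) \<open>v j0 \<notin> span T\<close> span_base vJ by blast
  show ?thesis
  proof (rule that)
    show "J \<subseteq> {..<m}" by (auto simp: J_def)
    show "v ` S \<subseteq> span (v ` J)" using T(3) span_mono[OF \<open>T \<subseteq> v ` J\<close>] by blast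
    show "v j0 \<notin> v ` J" using vJ by simp
    show "independent (insert (v j0) (v ` J))" using B(3) BJ by simp
    show "span (insert (v j0) (v ` J)) = UNIV"
      using B(4) sp BJ by (metis span_mono span_span top.extremum_uniqueI)
  qed
qed

lemma primitive_normal_to_hyperplane:
  fixes a :: "real^'n"
  assumes indep: "independent (insert a H)" and aH: "a \<notin> H" and sp: "span (insert a H) = UNIV"
    and lat: "\<forall>b\<in>insert a H. lattice_pt b"
  obtains mm where "primitive_pt mm" "dim (span H) = CARD('n) - 1"
    "\<And>w. w \<in> span H \<Longrightarrow> mm \<bullet> w = 0" "mm \<bullet> a \<noteq> 0"
proof -
  obtain G and D :: real and coord where G: "bij_betw G {..<CARD('n)} (insert a H)" and D: "D \<noteq> 0" "D \<in> \<int>"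
    and lc: "\<And>k. linear (coord k)" and ci: "\<And>k w. lattice_pt w \<Longrightarrow> coord k w \<in> \<int>"
    and "\<And>k w. rational_pt w \<Longrightarrow> coord k w \<in> \<rat>"
    and cG: "\<And>k k'. k < CARD('n) \<Longrightarrow> k' < CARD('n) \<Longrightarrow> coord k (G k') = (if k = k' then D else 0)"
    and "\<And>w. w = (\<Sum>k<CARD('n). (coord k w / D) *\<^sub>R G k)"
    using lattice_basis_coordinates[OF indep sp lat] by blast
  have "a \<in> G ` {..<CARD('n)}" using G by (simp add: bij_betw_def)
  then obtain k0 where k0: "k0 < CARD('n)" "G k0 = a" by auto
  define x :: "real^'n" where "x = (\<chi> t. coord k0 (axis t 1))"
  have xw: "x \<bullet> w = coord k0 w" for w unfolding x_def by (rule linear_eq_inner_vec[OF lc, symmetric])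
  have "lattice_pt (axis t 1 :: real^'n)" for t by (simp add: lattice_pt_def axis_def)
  then have "lattice_pt x" using ci by (simp add: x_def lattice_pt_def)
  moreover have xa: "x \<bullet> a = D" using xw[of a] cG[OF k0(1) k0(1)] k0(2) by simp
  then have "x \<noteq> 0" using D by auto
  ultimately obtain d :: int where d: "d \<ge> 1" "primitive_pt ((1 / of_int d) *\<^sub>R x)"
    by (rule exists_primitive_divisor)
  have "x \<bullet> b = 0" if "b \<in> H" for b
  proof -
    have "b \<in> G ` {..<CARD('n)}" using G that by (simp add: bij_betw_def)
    then obtain k' where k': "k' < CARD('n)" "G k' = b" by auto
    moreover have "k' \<noteq> k0" using k' k0 aH that by auto
    ultimately show ?thesis using xw[of b] cG[OF k0(1) k'(1)] by simp
  qed
  then have "x \<bullet> w = 0" if "w \<in> span H" for w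
    using orthogonal_to_span[OF that, of x] by (simp add: orthogonal_def)
  moreover have "dim (span H) = CARD('n) - 1"
  proof -
    have "independent H" using indep by (rule independent_mono) auto
    then show ?thesis using basis_card_eq_CARD[OF indep sp] aH by (auto simp: dim_eq_card_independent)
  qed
  ultimately show ?thesis using d xa D by (intro that[of "(1 / of_int d) *\<^sub>R x"]) auto
qed

definition normals_level_spanned :: "(nat \<Rightarrow> real^'n) \<Rightarrow> (nat \<Rightarrow> real) \<Rightarrow> nat \<Rightarrow> real^'n \<Rightarrow> bool" where
  "normals_level_spanned v lam m u \<longleftrightarrow>
     (\<forall>j<m. v j \<in> span (v ` {i. i < m \<and> i \<noteq> j \<and> ell v lam i u \<le> ell v lam j u}))"

lemma in_trop_if_normals_level_spanned:
  assumes C: "normals_level_spanned v lam m u" and sp: "span (v ` {..<m}) = UNIV"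
  shows "u \<in> trop v lam m mm"
proof (cases "mm = 0")
  case True
  then show ?thesis by (simp add: trop_def)
next
  case False
  define Z where "Z = {j. j < m \<and> mm \<bullet> v j \<noteq> 0}"
  have "Z \<noteq> {}"
  proof
    assume "Z = {}"
    then have "orthogonal mm (v j)" if "j < m" for j using that by (auto simp: Z_def orthogonal_def)
    then have "orthogonal mm mm" using orthogonal_to_span[of mm "v ` {..<m}"] sp by auto
    then show False using False by (simp add: orthogonal_def)
  qed
  moreover have finZ: "finite Z" by (auto simp: Z_def)
  ultimately have "Min ((\<lambda>j. ell v lam j u) ` Z) \<in> (\<lambda>j. ell v lam j u) ` Z" by (intro Min_in) auto
  then obtain j0 where j0: "j0 \<in> Z" and "ell v lam j0 u = Min ((\<lambda>j. ell v lam j u) ` Z)" by auto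
  with finZ have j0min: "ell v lam j0 u \<le> ell v lam j u" if "j \<in> Z" for j using that by simp
  let ?S = "{i. i < m \<and> i \<noteq> j0 \<and> ell v lam i u \<le> ell v lam j0 u}"
  have "\<exists>i\<in>?S. mm \<bullet> v i \<noteq> 0"
  proof (rule ccontr)
    assume "\<not> ?thesis"
    moreover have "v j0 \<in> span (v ` ?S)" using C j0 by (simp add: normals_level_spanned_def Z_def)
    ultimately have "orthogonal mm (v j0)"
      using orthogonal_to_span[of "v j0" "v ` ?S" mm] by (auto simp: orthogonal_def)
    then show False using j0 by (simp add: Z_def orthogonal_def)
  qed
  then obtain i where i: "i < m" "i \<noteq> j0" "ell v lam i u \<le> ell v lam j0 u" "mm \<bullet> v i \<noteq> 0" by blast
  have "ell v lam i u = ell v lam j0 u" using i j0min[of i] by (simp add: Z_def)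
  moreover have "\<forall>j<m. mm \<bullet> v j \<noteq> 0 \<longrightarrow> ell v lam j0 u \<le> ell v lam j u"
    using j0min by (simp add: Z_def)
  ultimately show ?thesis
    using False i j0 unfolding trop_def Z_def by (simp only: if_False mem_Collect_eq) metis
qed

lemma not_in_trop_if_isolated_normal:
  assumes "mm \<noteq> 0" and j0: "j0 < m" and nz: "mm \<bullet> v j0 \<noteq> 0"
    and orth: "\<And>i. i < m \<Longrightarrow> i \<noteq> j0 \<Longrightarrow> ell v lam i u \<le> ell v lam j0 u \<Longrightarrow> mm \<bullet> v i = 0"
  shows "u \<notin> trop v lam m mm"
proof
  assume "u \<in> trop v lam m mm"
  then obtain j1 j2 where j: "j1 < m" "j2 < m" "j1 \<noteq> j2" "mm \<bullet> v j1 \<noteq> 0" "mm \<bullet> v j2 \<noteq> 0"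
    "ell v lam j1 u = ell v lam j2 u" "\<forall>j<m. mm \<bullet> v j \<noteq> 0 \<longrightarrow> ell v lam j1 u \<le> ell v lam j u"
    using assms(1) unfolding trop_def by auto
  have le: "ell v lam j1 u \<le> ell v lam j0 u" using j(7) j0 nz by blast
  have "j1 = j0" using orth[OF j(1)] j(4) le by blast
  moreover have "j2 = j0" using orth[OF j(2)] j(5,6) le by auto
  ultimately show False using j(3) by simp
qed

lemma primitive_normal_not_in_trop:
  fixes v :: "nat \<Rightarrow> real^'n"
  assumes lat: "\<forall>j<m. lattice_pt (v j)" and sp: "span (v ` {..<m}) = UNIV"
    and nC: "\<not> normals_level_spanned v lam m u"
  obtains mm where "primitive_pt mm"
    "\<exists>J\<subseteq>{..<m}. dim (span (v ` J)) = CARD('n) - 1 \<and> (\<forall>w\<in>span (v ` J). mm \<bullet> w = 0)"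
    "u \<notin> trop v lam m mm"
proof -
  define S where "S j = {i. i < m \<and> i \<noteq> j \<and> ell v lam i u \<le> ell v lam j u}" for j
  obtain j0 where j0: "j0 < m" and nin: "v j0 \<notin> span (v ` S j0)"
    using nC unfolding normals_level_spanned_def S_def by blast
  obtain J where J: "J \<subseteq> {..<m}" "v ` S j0 \<subseteq> span (v ` J)" "v j0 \<notin> v ` J"
    "independent (insert (v j0) (v ` J))" "span (insert (v j0) (v ` J)) = UNIV"
    by (rule hyperplane_of_normals[OF sp j0 _ nin]) (auto simp: S_def)
  have "\<forall>b\<in>insert (v j0) (v ` J). lattice_pt b" using lat j0 J(1) by auto
  then obtain mm where mm: "primitive_pt mm" "dim (span (v ` J)) = CARD('n) - 1"
      "\<And>w. w \<in> span (v ` J) \<Longrightarrow> mm \<bullet> w = 0" "mm \<bullet> v j0 \<noteq> 0"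
    using primitive_normal_to_hyperplane[OF J(4,3,5)] by blast
  have "u \<notin> trop v lam m mm"
  proof (rule not_in_trop_if_isolated_normal)
    show "mm \<noteq> 0" using mm(1) by (simp add: primitive_pt_def)
    show "j0 < m" "mm \<bullet> v j0 \<noteq> 0" by (fact j0 mm(4))+
    show "mm \<bullet> v i = 0" if "i < m" "i \<noteq> j0" "ell v lam i u \<le> ell v lam j0 u" for i
      using that J(2) mm(3) by (auto simp: S_def)
  qed
  with mm J(1) show ?thesis by (intro that) auto
qed

section \<open>Levels of a point\<close>

definition levels_upto :: "(nat \<Rightarrow> real^'n) \<Rightarrow> (nat \<Rightarrow> real) \<Rightarrow> nat \<Rightarrow> real^'n \<Rightarrow> nat \<Rightarrow> nat set" where
  "levels_upto v lam m u l = (\<Union>l'\<in>{1..l}. lev_I v lam m u l')"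

context
  fixes v :: "nat \<Rightarrow> real^'n" and lam :: "nat \<Rightarrow> real" and m :: nat and u :: "real^'n"
begin

lemma set_lev_vals: "set (lev_vals v lam m u) = (\<lambda>j. ell v lam j u) ` {..<m}"
  by (simp add: lev_vals_def)

lemma sorted_wrt_lev_vals: "sorted_wrt (<) (lev_vals v lam m u)"
  by (simp add: lev_vals_def strict_sorted_list_of_set)

lemma lev_vals_nth_less_iff:
  assumes "a < length (lev_vals v lam m u)" "b < length (lev_vals v lam m u)"
  shows "lev_vals v lam m u ! a < lev_vals v lam m u ! b \<longleftrightarrow> a < b"
  using sorted_wrt_nth_less[OF sorted_wrt_lev_vals] assms
  by (metis linorder_neqE_nat order_less_asym order_less_irrefl)

lemma lev_vals_nth_eq_iff:
  assumes "a < length (lev_vals v lam m u)" "b < length (lev_vals v lam m u)"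
  shows "lev_vals v lam m u ! a = lev_vals v lam m u ! b \<longleftrightarrow> a = b"
  using assms by (simp add: lev_vals_def nth_eq_iff_index_eq)

lemma mem_lev_I_iff: "j \<in> lev_I v lam m u l \<longleftrightarrow> j < m \<and> ell v lam j u = lev_vals v lam m u ! (l - 1)"
  by (simp add: lev_I_def)

lemma lev_I_subset: "lev_I v lam m u l \<subseteq> {..<m}"
  by (auto simp: lev_I_def)

lemma exists_level:
  assumes "j < m"
  shows "\<exists>l. 1 \<le> l \<and> l \<le> length (lev_vals v lam m u) \<and> j \<in> lev_I v lam m u l"
proof -
  have "ell v lam j u \<in> set (lev_vals v lam m u)" using assms set_lev_vals by auto
  then obtain p where p: "p < length (lev_vals v lam m u)" "lev_vals v lam m u ! p = ell v lam j u"
    by (auto simp: in_set_conv_nth)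
  show ?thesis
    by (rule exI[of _ "Suc p"]) (use p assms in \<open>auto simp: mem_lev_I_iff\<close>)
qed

lemma same_value_eq_lev_I:
  assumes "j \<in> lev_I v lam m u l"
  shows "{i. i < m \<and> ell v lam i u = ell v lam j u} = lev_I v lam m u l"
  using assms by (auto simp: mem_lev_I_iff)

lemma lev_I_disjoint:
  assumes "1 \<le> l1" "l1 \<le> length (lev_vals v lam m u)" "1 \<le> l2" "l2 \<le> length (lev_vals v lam m u)" "l1 \<noteq> l2"
  shows "lev_I v lam m u l1 \<inter> lev_I v lam m u l2 = {}"
proof -
  have "lev_vals v lam m u ! (l1 - 1) \<noteq> lev_vals v lam m u ! (l2 - 1)"
    using lev_vals_nth_eq_iff[of "l1 - 1" "l2 - 1"] assms by auto
  then show ?thesis by (auto simp: mem_lev_I_iff)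
qed

lemma smaller_value_eq_levels_upto:
  assumes l: "1 \<le> l" "l \<le> length (lev_vals v lam m u)" and j: "j \<in> lev_I v lam m u l"
  shows "{i. i < m \<and> ell v lam i u < ell v lam j u} = levels_upto v lam m u (l - 1)"
proof
  show "{i. i < m \<and> ell v lam i u < ell v lam j u} \<subseteq> levels_upto v lam m u (l - 1)"
  proof
    fix i assume i: "i \<in> {i. i < m \<and> ell v lam i u < ell v lam j u}"
    then obtain l' where l': "1 \<le> l'" "l' \<le> length (lev_vals v lam m u)" "i \<in> lev_I v lam m u l'"
      using exists_level by blast
    have "lev_vals v lam m u ! (l' - 1) < lev_vals v lam m u ! (l - 1)"
      using i l' j by (auto simp: mem_lev_I_iff)
    then have "l' - 1 < l - 1" using lev_vals_nth_less_iff[of "l' - 1" "l - 1"] l l' by auto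
    then show "i \<in> levels_upto v lam m u (l - 1)" using l' by (auto simp: levels_upto_def)
  qed
next
  show "levels_upto v lam m u (l - 1) \<subseteq> {i. i < m \<and> ell v lam i u < ell v lam j u}"
  proof
    fix i assume "i \<in> levels_upto v lam m u (l - 1)"
    then obtain l' where l': "1 \<le> l'" "l' \<le> l - 1" "i \<in> lev_I v lam m u l'" by (auto simp: levels_upto_def)
    have "lev_vals v lam m u ! (l' - 1) < lev_vals v lam m u ! (l - 1)"
      using lev_vals_nth_less_iff[of "l' - 1" "l - 1"] l l' by auto
    then show "i \<in> {i. i < m \<and> ell v lam i u < ell v lam j u}" using l' j by (auto simp: mem_lev_I_iff)
  qed
qed

lemma levels_upto_mono: "a \<le> b \<Longrightarrow> levels_upto v lam m u a \<subseteq> levels_upto v lam m u b"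
  unfolding levels_upto_def by (rule UN_mono) auto

lemma levels_upto_subset: "levels_upto v lam m u l \<subseteq> {..<m}"
  using lev_I_subset by (auto simp: levels_upto_def)

lemma levels_upto_all: "levels_upto v lam m u (length (lev_vals v lam m u)) = {..<m}"
proof
  show "levels_upto v lam m u (length (lev_vals v lam m u)) \<subseteq> {..<m}" by (rule levels_upto_subset)
  show "{..<m} \<subseteq> levels_upto v lam m u (length (lev_vals v lam m u))"
  proof
    fix j assume "j \<in> {..<m}"
    then obtain l where "1 \<le> l" "l \<le> length (lev_vals v lam m u)" "j \<in> lev_I v lam m u l"
      using exists_level by blast
    then show "j \<in> levels_upto v lam m u (length (lev_vals v lam m u))" unfolding levels_upto_def by auto
  qed
qed

lemma levels_upto_0: "levels_upto v lam m u 0 = {}"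
  by (simp add: levels_upto_def)

lemma Aperp_eq_span_levels_upto: "Aperp v lam m u l = span (v ` levels_upto v lam m u l)"
  by (simp add: Aperp_def levels_upto_def)

lemma Aperp_length_lev_vals:
  assumes "span (v ` {..<m}) = UNIV"
  shows "Aperp v lam m u (length (lev_vals v lam m u)) = UNIV"
  using assms by (simp add: Aperp_eq_span_levels_upto levels_upto_all)

lemma Aperp_kappa:
  assumes "span (v ` {..<m}) = UNIV"
  shows "Aperp v lam m u (kappa v lam m u) = UNIV"
  unfolding kappa_def by (rule LeastI, rule Aperp_length_lev_vals[OF assms])

lemma kappa_le_length_lev_vals:
  assumes "span (v ` {..<m}) = UNIV"
  shows "kappa v lam m u \<le> length (lev_vals v lam m u)"
  unfolding kappa_def by (rule Least_le, rule Aperp_length_lev_vals[OF assms])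

end

lemma lower_or_tied_eq:
  assumes l: "1 \<le> l" "l \<le> length (lev_vals v lam m u)" and j: "j \<in> lev_I v lam m u l"
  shows "{i. i < m \<and> i \<noteq> j \<and> ell v lam i u \<le> ell v lam j u}
           = levels_upto v lam m u (l - 1) \<union> (lev_I v lam m u l - {j})"
proof -
  have "{i. i < m \<and> i \<noteq> j \<and> ell v lam i u \<le> ell v lam j u}
          = {i. i < m \<and> ell v lam i u < ell v lam j u} \<union> ({i. i < m \<and> ell v lam i u = ell v lam j u} - {j})"
    by auto
  then show ?thesis using smaller_value_eq_levels_upto[OF l j] same_value_eq_lev_I[OF j] by simp
qed

section \<open>Generalized leading term equations\<close>

lemma ymono_fun_upd:
  assumes k: "k < n"
  shows "ymono a n j (y(k:=t)) = t powi (a j k) * (\<Prod>k'\<in>{..<n}-{k}. y k' powi a j k')"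
proof -
  have "ymono a n j (y(k:=t)) = (y(k:=t)) k powi a j k * (\<Prod>k'\<in>{..<n}-{k}. (y(k:=t)) k' powi a j k')"
    unfolding ymono_def using k by (simp add: prod.remove)
  also have "(\<Prod>k'\<in>{..<n}-{k}. (y(k:=t)) k' powi a j k') = (\<Prod>k'\<in>{..<n}-{k}. y k' powi a j k')"
    by (rule prod.cong) auto
  finally show ?thesis by (simp only: fun_upd_same)
qed

lemma has_field_derivative_ymono:
  fixes y :: "nat \<Rightarrow> complex"
  assumes y: "\<forall>k'<n. y k' \<noteq> 0" and k: "k < n"
  shows "((\<lambda>t. ymono a n j (y(k:=t))) has_field_derivative (of_int (a j k) * ymono a n j y / y k)) (at (y k))"
proof -
  define R where "R = (\<Prod>k'\<in>{..<n}-{k}. y k' powi a j k')"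
  have eq: "(\<lambda>t. ymono a n j (y(k:=t))) = (\<lambda>t. t powi (a j k) * R)"
    using ymono_fun_upd[OF k] by (simp add: R_def)
  have yk: "y k \<noteq> 0" using y k by simp
  have d: "((\<lambda>t. t powi (a j k) * R) has_field_derivative (of_int (a j k) * y k powi (a j k - 1) * 1) * R) (at (y k))"
    by (rule DERIV_cmult_right, rule DERIV_power_int[OF DERIV_ident]) (use yk in simp)
  have "ymono a n j y = y k powi (a j k) * R"
    using ymono_fun_upd[OF k, of a j y "y k"] by (simp add: R_def)
  moreover have "y k powi (a j k - 1) = y k powi (a j k) / y k"
    using power_int_diff[of "y k" "a j k" 1] yk by simp
  ultimately have "(of_int (a j k) * y k powi (a j k - 1) * 1) * R = of_int (a j k) * ymono a n j y / y k"
    by simp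
  with d eq show ?thesis by simp
qed

lemma Fc_log_derivative:
  fixes y :: "nat \<Rightarrow> complex"
  assumes y: "\<forall>k'<CARD('n). y k' \<noteq> 0" and k: "k < CARD('n)"
  shows "y k * deriv (\<lambda>t. Fc (v :: nat \<Rightarrow> real^'n) lam m u a c l (y(k := t))) (y k)
         = (\<Sum>j\<in>lev_I v lam m u l. c j * of_int (a j k) * ymono a CARD('n) j y)"
proof -
  have yk: "y k \<noteq> 0" using y k by simp
  have "((\<lambda>t. Fc v lam m u a c l (y(k := t))) has_field_derivative
          (\<Sum>j\<in>lev_I v lam m u l. c j * (of_int (a j k) * ymono a CARD('n) j y / y k))) (at (y k))"
    unfolding Fc_def
    by (intro DERIV_sum DERIV_cmult has_field_derivative_ymono[OF y k])
  then have "deriv (\<lambda>t. Fc v lam m u a c l (y(k := t))) (y k) =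
          (\<Sum>j\<in>lev_I v lam m u l. c j * (of_int (a j k) * ymono a CARD('n) j y / y k))"
    by (rule DERIV_imp_deriv)
  then show ?thesis using yk by (simp add: sum_distrib_left field_simps)
qed

lemma admissible_basisD:
  fixes v :: "nat \<Rightarrow> real^'n"
  assumes "admissible_basis v lam m u e lev a"
  defines "K l \<equiv> {k. k < CARD('n) \<and> lev k \<le> l}"
  shows "\<And>k. k < CARD('n) \<Longrightarrow> 1 \<le> lev k \<and> lev k \<le> kappa v lam m u"
    and "\<And>l k. l \<in> {1..kappa v lam m u} \<Longrightarrow> k \<in> K l \<Longrightarrow> e k \<in> Aperp v lam m u l"
    and "\<And>l q. l \<in> {1..kappa v lam m u} \<Longrightarrow> \<forall>k\<in>K l. q k \<in> \<rat> \<Longrightarrow>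
           (\<Sum>k\<in>K l. q k *\<^sub>R e k) = 0 \<Longrightarrow> \<forall>k\<in>K l. q k = 0"
    and "\<And>l w. l \<in> {1..kappa v lam m u} \<Longrightarrow> w \<in> Aperp v lam m u l \<Longrightarrow> rational_pt w \<Longrightarrow>
           \<exists>q. (\<forall>k\<in>K l. q k \<in> \<rat>) \<and> w = (\<Sum>k\<in>K l. q k *\<^sub>R e k)"
    and "\<And>j. j < m \<Longrightarrow> v j = (\<Sum>k<CARD('n). of_int (a j k) *\<^sub>R e k)"
  using assms(1) unfolding admissible_basis_def Let_def K_def by auto

lemma admissible_coeff_eq_0_above_level:
  fixes v :: "nat \<Rightarrow> real^'n"
  assumes adm: "admissible_basis v lam m u e lev a" and lat: "\<forall>j<m. lattice_pt (v j)"
    and l: "1 \<le> l" "l \<le> kappa v lam m u" and j: "j \<in> lev_I v lam m u l"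
    and k: "k < CARD('n)" "l < lev k"
  shows "a j k = 0"
proof -
  let ?n = "CARD('n)" and ?\<kappa> = "kappa v lam m u"
  have jm: "j < m" using j lev_I_subset by blast
  have "j \<in> levels_upto v lam m u l" using j l by (auto simp: levels_upto_def)
  then have "v j \<in> Aperp v lam m u l" unfolding Aperp_eq_span_levels_upto by (intro span_base) blast
  moreover have "rational_pt (v j)" using lat jm by (simp add: lattice_pt_imp_rational_pt)
  ultimately obtain q where q: "\<forall>k\<in>{k. k < ?n \<and> lev k \<le> l}. q k \<in> \<rat>"
      "v j = (\<Sum>k\<in>{k. k < ?n \<and> lev k \<le> l}. q k *\<^sub>R e k)"
    using admissible_basisD(4)[OF adm, of l "v j"] l by auto
  define q' where "q' k = of_int (a j k) - (if lev k \<le> l then q k else 0)" for k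
  have "(\<Sum>k\<in>{k. k < ?n \<and> lev k \<le> l}. q k *\<^sub>R e k) = (\<Sum>k<?n. (if lev k \<le> l then q k else 0) *\<^sub>R e k)"
  proof -
    have "{k. k < ?n \<and> lev k \<le> l} = {k \<in> {..<?n}. lev k \<le> l}" by auto
    then show ?thesis
      by (simp add: sum.inter_filter[symmetric] if_distrib[of "\<lambda>x. x *\<^sub>R _"] cong: if_cong)
  qed
  then have "(\<Sum>k<?n. q' k *\<^sub>R e k) = 0"
    using admissible_basisD(5)[OF adm jm] q(2) by (simp add: q'_def scaleR_diff_left sum_subtractf)
  moreover have "\<forall>k<?n. q' k \<in> \<rat>" using q(1) by (auto simp: q'_def)
  moreover have "{k. k < ?n \<and> lev k \<le> ?\<kappa>} = {..<?n}" using admissible_basisD(1)[OF adm] by auto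
  moreover have "?\<kappa> \<in> {1..?\<kappa>}" using l by simp
  ultimately have "q' k = 0" using admissible_basisD(3)[OF adm, of ?\<kappa> q'] k by auto
  then show ?thesis using k by (simp add: q'_def)
qed

lemma leading_equations_imp_weighted_sum_zero:
  fixes v :: "nat \<Rightarrow> real^'n" and x :: "real^'n"
  assumes adm: "admissible_basis v lam m u e lev a" and lat: "\<forall>j<m. lattice_pt (v j)"
    and l: "1 \<le> l" "l \<le> kappa v lam m u" and ynz: "\<forall>k<CARD('n). y k \<noteq> 0"
    and eqs: "\<And>k. k < CARD('n) \<Longrightarrow> lev k = l \<Longrightarrow>
                y k * deriv (\<lambda>t. Fc v lam m u a c l (y(k := t))) (y k) = 0"
    and x: "\<And>k. k < CARD('n) \<Longrightarrow> lev k < l \<Longrightarrow> x \<bullet> e k = 0"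
  shows "(\<Sum>j\<in>lev_I v lam m u l. c j * ymono a CARD('n) j y * of_real (x \<bullet> v j)) = 0"
proof -
  let ?n = "CARD('n)"
  define I where "I = lev_I v lam m u l"
  define Kl where "Kl = {k. k < ?n \<and> lev k = l}"
  define Y where "Y j = ymono a ?n j y" for j
  have x_level: "x \<bullet> v j = (\<Sum>k\<in>Kl. of_int (a j k) * (x \<bullet> e k))" if j: "j \<in> I" for j
  proof -
    have jm: "j < m" using j lev_I_subset unfolding I_def by blast
    have "x \<bullet> v j = (\<Sum>k<?n. of_int (a j k) * (x \<bullet> e k))"
      using admissible_basisD(5)[OF adm jm] by (simp add: inner_sum_right)
    also have "\<dots> = (\<Sum>k\<in>Kl. of_int (a j k) * (x \<bullet> e k))"
    proof (rule sum.mono_neutral_right)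
      show "\<forall>k\<in>{..<?n} - Kl. of_int (a j k) * (x \<bullet> e k) = 0"
      proof
        fix k assume k: "k \<in> {..<?n} - Kl"
        then consider "lev k < l" | "l < lev k" by (force simp: Kl_def)
        then show "of_int (a j k) * (x \<bullet> e k) = 0"
        proof cases
          case 1
          then show ?thesis using x k by simp
        next
          case 2
          then show ?thesis
            using admissible_coeff_eq_0_above_level[OF adm lat l _ _ 2] j k by (simp add: I_def)
        qed
      qed
    qed (auto simp: Kl_def)
    finally show ?thesis .
  qed
  have eq: "(\<Sum>j\<in>I. c j * of_int (a j k) * Y j) = 0" if "k \<in> Kl" for k
  proof -
    have k: "k < ?n" "lev k = l" using that by (auto simp: Kl_def)
    show ?thesis using eqs[OF k] Fc_log_derivative[OF ynz k(1)] by (simp add: I_def Y_def)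
  qed
  have "0 = (\<Sum>k\<in>Kl. complex_of_real (x \<bullet> e k) * (\<Sum>j\<in>I. c j * of_int (a j k) * Y j))"
    using eq by simp
  also have "\<dots> = (\<Sum>k\<in>Kl. \<Sum>j\<in>I. c j * Y j * complex_of_real (of_int (a j k) * (x \<bullet> e k)))"
    by (simp add: sum_distrib_left mult_ac)
  also have "\<dots> = (\<Sum>j\<in>I. \<Sum>k\<in>Kl. c j * Y j * complex_of_real (of_int (a j k) * (x \<bullet> e k)))"
    by (rule sum.swap)
  also have "\<dots> = (\<Sum>j\<in>I. c j * Y j * complex_of_real (x \<bullet> v j))"
    using x_level by (simp add: sum_distrib_left of_real_sum)
  finally show ?thesis by (simp add: I_def Y_def)
qed

lemma normals_level_spanned_if_strongly_bulk_balanced: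
  fixes v :: "nat \<Rightarrow> real^'n"
  assumes lat: "\<forall>j<m. lattice_pt (v j)" and sp: "span (v ` {..<m}) = UNIV"
    and sbb: "strongly_bulk_balanced v lam m u"
  shows "normals_level_spanned v lam m u"
  unfolding normals_level_spanned_def
proof (intro allI impI, rule ccontr)
  let ?n = "CARD('n)" and ?\<kappa> = "kappa v lam m u"
  obtain e lev a c y where adm: "admissible_basis v lam m u e lev a"
    and cnz: "\<forall>j<m. c j \<noteq> 0" and ynz: "\<forall>k<?n. y k \<noteq> 0"
    and eqs: "\<forall>l\<in>{1..?\<kappa>}. \<forall>k<?n. lev k = l \<longrightarrow>
            y k * deriv (\<lambda>t. Fc v lam m u a c l (y(k := t))) (y k) = 0"
    using sbb unfolding strongly_bulk_balanced_def by blast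
  fix j0 assume j0: "j0 < m"
  let ?S = "{i. i < m \<and> i \<noteq> j0 \<and> ell v lam i u \<le> ell v lam j0 u}"
  assume nin: "v j0 \<notin> span (v ` ?S)"
  obtain l0 where l0: "1 \<le> l0" "l0 \<le> length (lev_vals v lam m u)" "j0 \<in> lev_I v lam m u l0"
    using exists_level[OF j0] by blast
  define I0 where "I0 = lev_I v lam m u l0"
  have S: "?S = levels_upto v lam m u (l0 - 1) \<union> (I0 - {j0})"
    unfolding I0_def by (rule lower_or_tied_eq[OF l0])
  have below: "Aperp v lam m u l \<subseteq> span (v ` ?S)" if "l < l0" for l
  proof -
    have "levels_upto v lam m u l \<subseteq> levels_upto v lam m u (l0 - 1)"
      using that by (intro levels_upto_mono) simp
    then show ?thesis unfolding Aperp_eq_span_levels_upto S by (intro span_mono image_mono) blast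
  qed
  have l0\<kappa>: "l0 \<le> ?\<kappa>"
  proof (rule ccontr)
    assume "\<not> l0 \<le> ?\<kappa>"
    moreover have "Aperp v lam m u ?\<kappa> = UNIV" by (rule Aperp_kappa[OF sp])
    ultimately show False using below[of ?\<kappa>] nin by auto
  qed
  obtain x where x: "\<And>w. w \<in> span (v ` ?S) \<Longrightarrow> x \<bullet> w = 0" and xj0: "x \<bullet> v j0 \<noteq> 0"
    using orthogonal_to_span_detecting[OF nin] by blast
  have xe: "x \<bullet> e k = 0" if "k < ?n" "lev k < l0" for k
  proof -
    have "e k \<in> Aperp v lam m u (lev k)" using admissible_basisD(1,2)[OF adm] that by simp
    then show ?thesis using below[OF that(2)] x by blast
  qed
  have "y k * deriv (\<lambda>t. Fc v lam m u a c l0 (y(k := t))) (y k) = 0" if "k < ?n" "lev k = l0" for k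
    using eqs l0(1) l0\<kappa> that by simp
  then have "(\<Sum>j\<in>I0. c j * ymono a ?n j y * of_real (x \<bullet> v j)) = 0"
    unfolding I0_def by (rule leading_equations_imp_weighted_sum_zero[OF adm lat l0(1) l0\<kappa> ynz _ xe])
  moreover have "x \<bullet> v j = 0" if "j \<in> I0 - {j0}" for j using x[OF span_base] that S by auto
  moreover have "finite I0" "j0 \<in> I0" using finite_subset[OF lev_I_subset] l0(3) by (auto simp: I0_def)
  ultimately have "c j0 * ymono a ?n j0 y * of_real (x \<bullet> v j0) = 0" by (simp add: sum.remove[of I0 j0])
  moreover have "ymono a ?n j0 y \<noteq> 0" using ynz by (simp add: ymono_def)
  ultimately show False using cnz j0 xj0 by simp
qed

lemma admissible_basisI:
  fixes v :: "nat \<Rightarrow> real^'n" and lam m u and coord :: "nat \<Rightarrow> real^'n \<Rightarrow> real"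
  defines "\<kappa> \<equiv> kappa v lam m u"
  assumes e: "\<And>k. k < CARD('n) \<Longrightarrow> rational_pt (e k) \<and> 1 \<le> lev k \<and> lev k \<le> \<kappa>"
    and lev: "\<And>k l. k < CARD('n) \<Longrightarrow> lev k \<le> l \<Longrightarrow> e k \<in> Aperp v lam m u l"
    and lc: "\<And>k. linear (coord k)" and cq: "\<And>k w. rational_pt w \<Longrightarrow> coord k w \<in> \<rat>"
    and dual: "\<And>k k'. k < CARD('n) \<Longrightarrow> k' < CARD('n) \<Longrightarrow> coord k (e k') = (if k = k' then 1 else 0)"
    and rep: "\<And>w. w = (\<Sum>k<CARD('n). coord k w *\<^sub>R e k)"
    and zero: "\<And>l w k. l \<le> \<kappa> \<Longrightarrow> w \<in> Aperp v lam m u l \<Longrightarrow> k < CARD('n) \<Longrightarrow> l < lev k \<Longrightarrow>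
                 coord k w = 0"
    and a: "\<And>j. j < m \<Longrightarrow> v j = (\<Sum>k<CARD('n). of_int (a j k) *\<^sub>R e k)"
  shows "admissible_basis v lam m u e lev a"
  unfolding admissible_basis_def Let_def \<kappa>_def[symmetric]
proof (intro conjI ballI allI impI)
  fix l assume l: "l \<in> {1..\<kappa>}"
  let ?K = "{k. k < CARD('n) \<and> lev k \<le> l}"
  show "e k \<in> Aperp v lam m u l" if "k \<in> ?K" for k using lev that by blast
  show "q k0 = 0" if "(\<forall>k\<in>?K. q k \<in> \<rat>) \<and> (\<Sum>k\<in>?K. q k *\<^sub>R e k) = 0" and k0: "k0 \<in> ?K" for q k0
  proof -
    have "0 = coord k0 (\<Sum>k\<in>?K. q k *\<^sub>R e k)" using that linear_0[OF lc] by simp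
    also have "\<dots> = (\<Sum>k\<in>?K. q k * coord k0 (e k))"
      by (simp add: linear_sum[OF lc] linear_scale[OF lc])
    also have "\<dots> = (\<Sum>k\<in>?K. (if k = k0 then q k0 else 0))"
      using k0 by (intro sum.cong) (auto simp: dual)
    finally show "q k0 = 0" using k0 by simp
  qed
  show "\<exists>q. (\<forall>k\<in>?K. q k \<in> \<rat>) \<and> w = (\<Sum>k\<in>?K. q k *\<^sub>R e k)"
    if w: "w \<in> Aperp v lam m u l" and "rational_pt w" for w
  proof (intro exI conjI)
    show "\<forall>k\<in>?K. coord k w \<in> \<rat>" using cq \<open>rational_pt w\<close> by blast
    have "w = (\<Sum>k<CARD('n). coord k w *\<^sub>R e k)" by (rule rep)
    also have "\<dots> = (\<Sum>k\<in>?K. coord k w *\<^sub>R e k)"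
      using zero[of l w] l w by (intro sum.mono_neutral_right) (auto simp: not_le)
    finally show "w = (\<Sum>k\<in>?K. coord k w *\<^sub>R e k)" .
  qed
qed (use e a in auto)

lemma exists_admissible_basis:
  fixes v :: "nat \<Rightarrow> real^'n"
  assumes lat: "\<forall>j<m. lattice_pt (v j)" and sp: "span (v ` {..<m}) = UNIV"
  obtains e lev a and coord :: "nat \<Rightarrow> real^'n \<Rightarrow> real" where "admissible_basis v lam m u e lev a"
    "\<And>k. linear (coord k)"
    "\<And>j k. j < m \<Longrightarrow> of_int (a j k) = coord k (v j)"
    "\<And>l w k. l \<le> kappa v lam m u \<Longrightarrow> w \<in> Aperp v lam m u l \<Longrightarrow> k < CARD('n) \<Longrightarrow> l < lev k \<Longrightarrow>
       coord k w = 0"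
proof -
  let ?n = "CARD('n)" and ?\<kappa> = "kappa v lam m u"
  define V where "V l = v ` levels_upto v lam m u l" for l
  have AV: "Aperp v lam m u l = span (V l)" for l by (simp add: Aperp_eq_span_levels_upto V_def)
  have "V l \<subseteq> V (Suc l)" for l unfolding V_def by (intro image_mono levels_upto_mono) simp
  moreover have "V 0 = {}" by (simp add: V_def levels_upto_0)
  moreover have "span (V ?\<kappa>) = UNIV" using Aperp_kappa[OF sp, of lam u] AV by simp
  moreover have "\<forall>b\<in>V ?\<kappa>. lattice_pt b" using lat levels_upto_subset by (force simp: V_def)
  ultimately obtain G and D :: real and coord lev where
    latG: "\<And>k. k < ?n \<Longrightarrow> lattice_pt (G k)" and D: "D \<noteq> 0" "D \<in> \<int>"
    and lc: "\<And>k. linear (coord k)"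
    and ci: "\<And>k w. lattice_pt w \<Longrightarrow> coord k w \<in> \<int>"
    and cq: "\<And>k w. rational_pt w \<Longrightarrow> coord k w \<in> \<rat>"
    and cG: "\<And>k k'. k < ?n \<Longrightarrow> k' < ?n \<Longrightarrow> coord k (G k') = (if k = k' then D else 0)"
    and rep: "\<And>w. w = (\<Sum>k<?n. (coord k w / D) *\<^sub>R G k)"
    and lev: "\<And>k. k < ?n \<Longrightarrow> 1 \<le> lev k \<and> lev k \<le> ?\<kappa>"
    and LV: "\<And>k l. k < ?n \<Longrightarrow> lev k \<le> l \<longleftrightarrow> G k \<in> V l"
    and zero: "\<And>l w k. l \<le> ?\<kappa> \<Longrightarrow> w \<in> span (V l) \<Longrightarrow> k < ?n \<Longrightarrow> l < lev k \<Longrightarrow> coord k w = 0"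
    by (rule exists_graded_lattice_basis) blast
  define e where "e k = (1 / D) *\<^sub>R G k" for k
  define a where "a j k = \<lfloor>coord k (v j)\<rfloor>" for j k
  have a: "of_int (a j k) = coord k (v j)" if "j < m" for j k
    using ci lat that unfolding a_def by (metis Ints_cases floor_of_int)
  have rep': "w = (\<Sum>k<?n. coord k w *\<^sub>R e k)" for w
    using rep[of w] by (simp add: e_def)
  have "admissible_basis v lam m u e lev a"
  proof (rule admissible_basisI[where coord = coord])
    show "rational_pt (e k) \<and> 1 \<le> lev k \<and> lev k \<le> ?\<kappa>" if "k < ?n" for k
      using latG[OF that] lev[OF that] D(2) Ints_subset_Rats
      by (auto simp: e_def rational_pt_def lattice_pt_def intro!: Rats_divide)
    show "e k \<in> Aperp v lam m u l" if "k < ?n" "lev k \<le> l" for k l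
      using LV that unfolding e_def AV by (blast intro: span_mul span_base)
    show "coord k (e k') = (if k = k' then 1 else 0)" if "k < ?n" "k' < ?n" for k k'
      using cG[OF that] D(1) by (simp add: e_def linear_scale[OF lc])
    show "v j = (\<Sum>k<?n. of_int (a j k) *\<^sub>R e k)" if "j < m" for j
      using rep'[of "v j"] a[OF that] by simp
  qed (use lc cq rep' zero in \<open>auto simp: AV\<close>)
  with lc a zero show ?thesis by (intro that[of e lev a coord]) (auto simp: AV)
qed

text \<open>For real c, the point y = (1, ..., 1) solves the generalized leading term equations
  exactly when c lies in the following space: at y = 1 the term y_k dF_l/dy_k reduces to
  the sum of c_j a_jk over j in I_l.\<close>

definition leading_relations ::
  "(nat \<Rightarrow> real^'n) \<Rightarrow> (nat \<Rightarrow> real) \<Rightarrow> nat \<Rightarrow> real^'n \<Rightarrow> (nat \<Rightarrow> nat) \<Rightarrow> (nat \<Rightarrow> nat \<Rightarrow> int) \<Rightarrow>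
   (nat \<Rightarrow> real) set" where
  "leading_relations v lam m u lev a =
     {c. \<forall>l\<in>{1..kappa v lam m u}. \<forall>k<CARD('n). lev k = l \<longrightarrow>
           (\<Sum>j\<in>lev_I v lam m u l. c j * of_int (a j k)) = 0}"

lemma leading_relation_nonzero_at:
  fixes v :: "nat \<Rightarrow> real^'n" and coord :: "nat \<Rightarrow> real^'n \<Rightarrow> real"
  assumes C: "normals_level_spanned v lam m u" and sp: "span (v ` {..<m}) = UNIV"
    and lc: "\<And>k. linear (coord k)" and a: "\<And>j k. j < m \<Longrightarrow> of_int (a j k) = coord k (v j)"
    and zero: "\<And>l w k. l \<le> kappa v lam m u \<Longrightarrow> w \<in> Aperp v lam m u l \<Longrightarrow> k < CARD('n) \<Longrightarrow>
                 l < lev k \<Longrightarrow> coord k w = 0"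
    and j: "j < m"
  shows "\<exists>\<rho>\<in>leading_relations v lam m u lev a. \<rho> j \<noteq> 0"
proof -
  obtain l where l: "1 \<le> l" "l \<le> length (lev_vals v lam m u)" "j \<in> lev_I v lam m u l"
    using exists_level[OF j] by blast
  define I where "I = lev_I v lam m u l"
  have finI: "finite I" unfolding I_def by (rule finite_subset[OF lev_I_subset]) simp
  have "v j \<in> span (v ` {i. i < m \<and> i \<noteq> j \<and> ell v lam i u \<le> ell v lam j u})"
    using C j unfolding normals_level_spanned_def by blast
  then have "v j \<in> span (v ` levels_upto v lam m u (l - 1) \<union> v ` (I - {j}))"
    unfolding lower_or_tied_eq[OF l] I_def image_Un .
  then obtain w z where wz: "v j = w + z" "w \<in> Aperp v lam m u (l - 1)" "z \<in> span (v ` (I - {j}))"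
    unfolding span_Un Aperp_eq_span_levels_upto by blast
  obtain r where r: "z = (\<Sum>i\<in>I - {j}. r i *\<^sub>R v i)"
    using in_span_image_imp_sum[OF _ wz(3)] finI by blast
  define \<rho> where "\<rho> i = (if i = j then 1 else if i \<in> I - {j} then - r i else 0)" for i
  have "(\<Sum>i\<in>lev_I v lam m u l'. \<rho> i * of_int (a i k)) = 0"
    if l': "l' \<in> {1..kappa v lam m u}" and k: "k < CARD('n)" "lev k = l'" for l' k
  proof (cases "l' = l")
    case False
    have "l' \<le> length (lev_vals v lam m u)" using l' kappa_le_length_lev_vals[OF sp, of lam u] by simp
    then have "lev_I v lam m u l' \<inter> I = {}"
      unfolding I_def using l' l False by (intro lev_I_disjoint) auto
    then have "\<forall>i\<in>lev_I v lam m u l'. \<rho> i = 0" using l(3) unfolding \<rho>_def I_def by auto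
    then show ?thesis by simp
  next
    case True
    have jI: "j \<in> I" and Im: "\<forall>i\<in>I. i < m" using l(3) lev_I_subset unfolding I_def by blast+
    have "(\<Sum>i\<in>I. \<rho> i * of_int (a i k)) = \<rho> j * of_int (a j k) + (\<Sum>i\<in>I - {j}. \<rho> i * of_int (a i k))"
      by (rule sum.remove[OF finI jI])
    also have "\<dots> = coord k (v j) - (\<Sum>i\<in>I - {j}. r i * coord k (v i))"
      using a Im j by (simp add: \<rho>_def sum_negf)
    also have "coord k (v j) = coord k w + (\<Sum>i\<in>I - {j}. r i * coord k (v i))"
      using wz(1) r by (simp add: linear_add[OF lc] linear_sum[OF lc] linear_scale[OF lc])
    also have "coord k w = 0"
      by (rule zero[of "l - 1" w k]) (use wz(2) k True l' in auto)
    finally show ?thesis using True by (simp add: I_def)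
  qed
  then have "\<rho> \<in> leading_relations v lam m u lev a" by (auto simp: leading_relations_def)
  moreover have "\<rho> j \<noteq> 0" by (simp add: \<rho>_def)
  ultimately show ?thesis by blast
qed

lemma strongly_bulk_balanced_if_normals_level_spanned:
  fixes v :: "nat \<Rightarrow> real^'n"
  assumes lat: "\<forall>j<m. lattice_pt (v j)" and sp: "span (v ` {..<m}) = UNIV"
    and C: "normals_level_spanned v lam m u"
  shows "strongly_bulk_balanced v lam m u"
proof -
  let ?n = "CARD('n)"
  obtain e lev a and coord :: "nat \<Rightarrow> real^'n \<Rightarrow> real" where adm: "admissible_basis v lam m u e lev a"
    and lc: "\<And>k. linear (coord k)" and a: "\<And>j k. j < m \<Longrightarrow> of_int (a j k) = coord k (v j)"
    and zero: "\<And>l w k. l \<le> kappa v lam m u \<Longrightarrow> w \<in> Aperp v lam m u l \<Longrightarrow> k < ?n \<Longrightarrow>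
                 l < lev k \<Longrightarrow> coord k w = 0"
    by (rule exists_admissible_basis[OF lat sp]) blast
  let ?R = "leading_relations v lam m u lev a"
  have "\<exists>c\<in>?R. \<forall>j\<in>{..<m}. c j \<noteq> 0"
  proof (rule exists_nowhere_zero_member)
    show "(\<lambda>_. 0) \<in> ?R" by (simp add: leading_relations_def)
    show "(\<lambda>i. c i + d i) \<in> ?R" if "c \<in> ?R" "d \<in> ?R" for c d
      using that by (simp add: leading_relations_def distrib_right sum.distrib)
    show "(\<lambda>i. s * c i) \<in> ?R" if "c \<in> ?R" for c s
      using that by (simp add: leading_relations_def mult.assoc sum_distrib_left[symmetric])
    show "\<exists>c\<in>?R. c j \<noteq> 0" if "j \<in> {..<m}" for j
      by (rule leading_relation_nonzero_at[where coord = coord]) (use C sp lc a zero that in auto)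
  qed simp
  then obtain c where c: "c \<in> ?R" "\<forall>j<m. c j \<noteq> 0" by auto
  have "y k * deriv (\<lambda>t. Fc v lam m u a (\<lambda>j. of_real (c j)) l (y(k := t))) (y k) = 0"
    if y: "y = (\<lambda>_. 1)" and l: "l \<in> {1..kappa v lam m u}" and k: "k < ?n" "lev k = l" for y l k
  proof -
    have "y k * deriv (\<lambda>t. Fc v lam m u a (\<lambda>j. of_real (c j)) l (y(k := t))) (y k)
          = (\<Sum>j\<in>lev_I v lam m u l. of_real (c j) * of_int (a j k) * ymono a ?n j y)"
      by (rule Fc_log_derivative) (use y k in auto)
    also have "\<dots> = of_real (\<Sum>j\<in>lev_I v lam m u l. c j * of_int (a j k))"
      by (simp add: y ymono_def of_real_sum)
    also have "(\<Sum>j\<in>lev_I v lam m u l. c j * of_int (a j k)) = 0"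
      using c(1) l k unfolding leading_relations_def by blast
    finally show ?thesis by (simp only: of_real_0)
  qed
  then show ?thesis
    unfolding strongly_bulk_balanced_def using adm c(2)
    by (intro exI[of _ e] exI[of _ lev] exI[of _ a] exI[of _ "\<lambda>j. of_real (c j)"] exI[of _ "\<lambda>_. 1"]) auto
qed

theorem theoremA:
  fixes v :: "nat \<Rightarrow> real^'n" and lam :: "nat \<Rightarrow> real" and m :: nat and u :: "real^'n"
  assumes "delzant_presentation v lam m"
    and "u \<in> interior (polytope v lam m)"
  shows "(strongly_bulk_balanced v lam m u \<longleftrightarrow> (\<forall>mm. lattice_pt mm \<longrightarrow> u \<in> trop v lam m mm))
       \<and> ((\<forall>mm. lattice_pt mm \<longrightarrow> u \<in> trop v lam m mm) \<longleftrightarrow>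
          (\<forall>mm. primitive_pt mm \<and>
                (\<exists>J\<subseteq>{..<m}. dim (span (v ` J)) = CARD('n) - 1 \<and>
                              (\<forall>w\<in>span (v ` J). mm \<bullet> w = 0))
                \<longrightarrow> u \<in> trop v lam m mm))"
proof -
  \<comment> \<open>of the Delzant conditions only boundedness and integrality of the normals are used\<close>
  have lat: "\<forall>j<m. lattice_pt (v j)"
    using assms(1) by (simp add: delzant_presentation_def primitive_pt_def)
  have sp: "span (v ` {..<m}) = UNIV"
    using assms normals_span_UNIV interior_subset by (metis delzant_presentation_def subsetD)
  have "strongly_bulk_balanced v lam m u \<longleftrightarrow> normals_level_spanned v lam m u"
    using normals_level_spanned_if_strongly_bulk_balanced[OF lat sp]
      strongly_bulk_balanced_if_normals_level_spanned[OF lat sp] by blast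
  moreover have "normals_level_spanned v lam m u \<Longrightarrow> u \<in> trop v lam m mm" for mm
    using in_trop_if_normals_level_spanned sp by blast
  moreover have "\<not> normals_level_spanned v lam m u \<Longrightarrow>
      \<exists>mm. primitive_pt mm \<and> lattice_pt mm \<and>
        (\<exists>J\<subseteq>{..<m}. dim (span (v ` J)) = CARD('n) - 1 \<and> (\<forall>w\<in>span (v ` J). mm \<bullet> w = 0)) \<and>
        u \<notin> trop v lam m mm"
    using primitive_normal_not_in_trop[OF lat sp] by (metis primitive_pt_def)
  ultimately show ?thesis by blast
qed

end
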